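(* Let $h\ge 1$ be an integer and let $O$ be a finite set of next hops with $\delta=|O|$ and probability distribution $(p_o)_{o\in O}$. Let $T$ be the complete binary trie of height $h$ whose $2^h$ leaves are labeled independently, each leaf receiving next hop $o$ with probability $p_o$. Let $D$ be the DAG obtained from $T$ by trie-folding, and for $1\le j\le h$ let $V^j_D$ be the set of nodes of $D$ at level $j$. Then for every $1\le j\le h$, \[E(|V^j_D|) \leq \min\left\{\frac{H_O}{h-j} 2^{h} + 3,\ 2^{h-j},\ \delta^{2^j} \right\},\] where $H_O=\sum_{o\in O} p_o\log_2\frac{1}{p_o}$, and the first term is interpreted as $+\infty$ when $j=h$.
   Context: Levels: the level of a node of $T$ is $h$ minus its distance (number of edges) from the root, so the root has level $h$, the leaves have level $0$, and level $j$ contains $2^{h-j}$ nodes, each being the root of a subtrie of height $j$ with $2^j$ labeled leaves. Trie-folding: two nodes of $T$ are merged whenever the subtries rooted at them are identical, i.e. have the same structure and the same sequence of next-hop labels at their leaves; the result is a DAG $D$ in which each distinct labeled subtrie is represented once. Thus the nodes of $D$ at level $j$ correspond to the distinct leaf-label strings of length $2^j$ occurring among the $2^{h-j}$ subtries rooted at level $j$. Terms with $p_o=0$ contribute $0$ to $H_O$. *)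

theory Defs
  imports Complex_Main "HOL-Library.FuncSet"
begin

text \<open>A labeling of the 2^h leaves (indexed 0..2^h-1, left to right) of the complete
binary trie of height h by next hops.  The subtrie rooted at the m-th node of level j
(m < 2^(h-j)) has leaf-label string lbl[m*2^j ..< (m+1)*2^j].  After trie-folding, the
nodes of D at level j correspond to the distinct such strings.\<close>

definition subtrie_string :: "nat \<Rightarrow> (nat \<Rightarrow> 'a) \<Rightarrow> nat \<Rightarrow> 'a list" where
  "subtrie_string j lbl m = map lbl [m * 2^j ..< (m + 1) * 2^j]"

definition folded_level_nodes :: "nat \<Rightarrow> nat \<Rightarrow> (nat \<Rightarrow> 'a) \<Rightarrow> 'a list set" where
  "folded_level_nodes h j lbl = subtrie_string j lbl ` {..< 2^(h - j)}"

definition labeling_prob :: "nat \<Rightarrow> ('a \<Rightarrow> real) \<Rightarrow> (nat \<Rightarrow> 'a) \<Rightarrow> real" where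
  "labeling_prob h p lbl = (\<Prod>i<2^h. p (lbl i))"

definition expected_level_nodes :: "nat \<Rightarrow> nat \<Rightarrow> 'a set \<Rightarrow> ('a \<Rightarrow> real) \<Rightarrow> real" where
  "expected_level_nodes h j Hops p =
     (\<Sum>lbl \<in> ({..<2^h} \<rightarrow>\<^sub>E Hops). labeling_prob h p lbl * real (card (folded_level_nodes h j lbl)))"

definition entropy :: "'a set \<Rightarrow> ('a \<Rightarrow> real) \<Rightarrow> real" where
  "entropy Hops p = (\<Sum>x\<in>Hops. if p x = 0 then 0 else p x * log 2 (1 / p x))"

end

theory Submission
  imports Defs "HOL-Analysis.Convex"
begin

text \<open>The nodes of level \<open>j\<close> of the folded trie are the distinct strings among the
\<open>2^(h-j)\<close> subtrie strings, each a word of length \<open>2^j\<close> over the next hops; counting subtries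
resp. words gives the last two bounds. For the entropy bound, a word \<open>s\<close> of probability \<open>q s\<close>
occurs at level \<open>j\<close> with probability at most \<open>min 1 (2^(h-j) * q s)\<close>, and
\<open>min 1 (2^L * q) \<le> 2^L * q * log 2 (1/q) / L + q\<close>. Summing over all words, the entropy of
\<open>2^j\<close> independent labels is \<open>2^j * H_O\<close>, so the expectation is at most
\<open>H_O / (h-j) * 2^h + 1\<close>.\<close>

definition entropy_term :: "real \<Rightarrow> real" where
  "entropy_term x = (if x = 0 then 0 else x * log 2 (1 / x))"

lemma entropy_eq_sum_entropy_term: "entropy A p = (\<Sum>x\<in>A. entropy_term (p x))"
  by (simp add: entropy_def entropy_term_def)

lemma entropy_term_mult:
  assumes "0 \<le> x" "0 \<le> y"
  shows "entropy_term (x * y) = y * entropy_term x + x * entropy_term y"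
proof (cases "x = 0 \<or> y = 0")
  case False
  with assms have "x > 0" "y > 0" by auto
  then have "log 2 (1 / (x * y)) = log 2 (1 / x) + log 2 (1 / y)"
    by (simp add: log_recip log_mult_pos)
  with \<open>x > 0\<close> \<open>y > 0\<close> show ?thesis
    by (simp add: entropy_term_def algebra_simps)
qed (auto simp: entropy_term_def)

definition words :: "'a set \<Rightarrow> nat \<Rightarrow> 'a list set" where
  "words A n = {xs. set xs \<subseteq> A \<and> length xs = n}"

lemma finite_words: "finite A \<Longrightarrow> finite (words A n)"
  by (simp add: words_def finite_lists_length_eq)

lemma card_words: "finite A \<Longrightarrow> card (words A n) = card A ^ n"
  by (simp add: words_def card_lists_length_eq)

lemma words_0: "words A 0 = {[]}"
  by (auto simp: words_def)

lemma sum_words_Suc: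
  assumes "finite A"
  shows "(\<Sum>xs\<in>words A (Suc n). f xs) = (\<Sum>xs\<in>words A n. \<Sum>a\<in>A. f (a # xs))"
  unfolding words_def lists_length_Suc_eq
  by (subst sum.reindex) (auto simp: inj_on_def sum.cartesian_product case_prod_unfold)

lemma sum_words_prod_list:
  fixes p :: "'a \<Rightarrow> 'b :: comm_semiring_1"
  assumes "finite A"
  shows "(\<Sum>xs\<in>words A n. prod_list (map p xs)) = sum p A ^ n"
proof (induction n)
  case 0
  then show ?case by (simp add: words_0)
next
  case (Suc n)
  then show ?case
    by (simp add: sum_words_Suc[OF assms] sum_distrib_left[symmetric] sum_distrib_right[symmetric]
        mult.commute)
qed

lemma prod_list_map_nonneg:
  fixes p :: "'a \<Rightarrow> 'b :: linordered_semidom"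
  assumes "\<And>a. a \<in> A \<Longrightarrow> 0 \<le> p a" "xs \<in> words A n"
  shows "0 \<le> prod_list (map p xs)"
  using assms by (fastforce simp: words_def intro!: prod_list_nonneg)

lemma entropy_words:
  assumes "finite A" "\<And>a. a \<in> A \<Longrightarrow> 0 \<le> p a" "sum p A = 1"
  shows "entropy (words A n) (\<lambda>xs. prod_list (map p xs)) = n * entropy A p"
proof (induction n)
  case 0
  then show ?case by (simp add: words_0 entropy_eq_sum_entropy_term entropy_term_def)
next
  case (Suc n)
  let ?Q = "\<lambda>xs. prod_list (map p xs)"
  have "entropy_term (?Q (a # xs)) = ?Q xs * entropy_term (p a) + p a * entropy_term (?Q xs)"
    if "xs \<in> words A n" "a \<in> A" for xs a
    using entropy_term_mult[OF assms(2)[OF that(2)] prod_list_map_nonneg[OF assms(2) that(1)]]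
    by simp
  then have "entropy (words A (Suc n)) ?Q
      = (\<Sum>xs\<in>words A n. \<Sum>a\<in>A. ?Q xs * entropy_term (p a) + p a * entropy_term (?Q xs))"
    unfolding entropy_eq_sum_entropy_term sum_words_Suc[OF assms(1)] by simp
  also have "\<dots> = (\<Sum>xs\<in>words A n. ?Q xs * entropy A p + entropy_term (?Q xs))"
    by (simp add: sum.distrib entropy_eq_sum_entropy_term sum_distrib_left
        sum_distrib_right[symmetric] assms(3))
  also have "\<dots> = entropy A p + n * entropy A p"
    using Suc.IH by (simp add: sum.distrib sum_distrib_right[symmetric] sum_words_prod_list
        assms entropy_eq_sum_entropy_term)
  finally show ?case by (simp add: algebra_simps)
qed

lemma log_ge_chord:
  fixes x N :: real
  assumes "1 \<le> x" "x \<le> N" "1 < N"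
  shows "log 2 N * (x - 1) / (N - 1) \<le> log 2 x"
proof -
  have "concave_on {1..N} (log 2)"
    using log_concave[of 2] unfolding concave_on_def
    by (rule convex_on_subset) auto
  from concave_onD_Icc'[OF this] assms show ?thesis
    by simp
qed

text \<open>For \<open>q \<le> 2^-L\<close> we have \<open>log 2 (1/q) \<ge> L\<close>; for larger \<open>q\<close>, the chord of the concave
\<open>log 2\<close> on \<open>[1, 2^L]\<close> at \<open>x = 1/q\<close> bounds \<open>1 - q\<close>.\<close>

lemma min_one_le_entropy_term:
  fixes q :: real and L :: nat
  assumes "0 \<le> q" "q \<le> 1" "1 \<le> L"
  shows "min 1 (2^L * q) \<le> 2^L * entropy_term q / L + q"
proof -
  define N :: real where "N = 2^L"
  have "N > 1" using assms by (simp add: N_def)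
  have log_N: "log 2 N = L" by (simp add: N_def)
  consider "q = 0" | "0 < q" "q \<le> 1 / N" | "1 / N < q" using assms by fastforce
  then show ?thesis
  proof cases
    case 1
    then show ?thesis by (simp add: entropy_term_def)
  next
    case 2
    then have "log 2 N \<le> log 2 (1 / q)" using \<open>N > 1\<close> by (simp add: field_simps)
    then have "N * q * 1 \<le> N * q * (log 2 (1 / q) / L)"
      using 2 \<open>N > 1\<close> assms log_N by (intro mult_left_mono) auto
    then show ?thesis using 2 by (simp add: entropy_term_def N_def field_simps)
  next
    case 3
    define x where "x = 1 / q"
    have "0 < 1 / N" using \<open>N > 1\<close> by simp
    with 3 have "q > 0" by linarith
    then have "1 \<le> x" "x \<le> N"
      using 3 assms \<open>N > 1\<close> by (auto simp: x_def field_simps)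
    have "1 - q \<le> N * q * (x - 1) / (N - 1)"
      using \<open>N > 1\<close> \<open>q > 0\<close> assms by (simp add: x_def field_simps)
    also have "\<dots> = N * q * (log 2 N * (x - 1) / (N - 1)) / L"
      using assms by (simp add: log_N)
    also have "\<dots> \<le> N * q * log 2 x / L"
      using log_ge_chord[OF \<open>1 \<le> x\<close> \<open>x \<le> N\<close> \<open>N > 1\<close>] \<open>q > 0\<close> \<open>N > 1\<close>
      by (intro divide_right_mono mult_left_mono) auto
    finally show ?thesis using \<open>q > 0\<close> by (simp add: entropy_term_def x_def N_def)
  qed
qed

lemma sum_min_one_le_entropy:
  fixes q :: "'b \<Rightarrow> real" and L :: nat
  assumes "finite S" "\<And>s. s \<in> S \<Longrightarrow> 0 \<le> q s" "sum q S = 1" "1 \<le> L"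
  shows "(\<Sum>s\<in>S. min 1 (2^L * q s)) \<le> 2^L * entropy S q / L + 1"
proof -
  have "q s \<le> 1" if "s \<in> S" for s
    using member_le_sum[of s S q] that assms by auto
  then have "(\<Sum>s\<in>S. min 1 (2^L * q s)) \<le> (\<Sum>s\<in>S. 2^L * entropy_term (q s) / L + q s)"
    using assms by (intro sum_mono min_one_le_entropy_term) auto
  also have "\<dots> = 2^L * entropy S q / L + 1"
    by (simp add: sum.distrib entropy_eq_sum_entropy_term sum_distrib_left sum_divide_distrib assms)
  finally show ?thesis .
qed

lemma weighted_sum_le:
  fixes P X :: "'b \<Rightarrow> real"
  assumes "\<And>x. x \<in> \<Omega> \<Longrightarrow> 0 \<le> P x" "sum P \<Omega> = 1" "\<And>x. x \<in> \<Omega> \<Longrightarrow> X x \<le> c"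
  shows "(\<Sum>x\<in>\<Omega>. P x * X x) \<le> c"
proof -
  have "(\<Sum>x\<in>\<Omega>. P x * X x) \<le> (\<Sum>x\<in>\<Omega>. P x * c)"
    using assms by (intro sum_mono mult_left_mono) auto
  also have "\<dots> = c"
    using assms(2) by (simp add: sum_distrib_right[symmetric])
  finally show ?thesis .
qed

lemma of_bool_mem_image_le_min_count:
  assumes "finite K"
  shows "of_bool (s \<in> Y ` K) \<le> min 1 (\<Sum>m\<in>K. of_bool (Y m = s) :: real)"
proof (cases "s \<in> Y ` K")
  case True
  then obtain m where "m \<in> K" "Y m = s" by auto
  then have "1 \<le> (\<Sum>m\<in>K. of_bool (Y m = s) :: real)"
    using member_le_sum[of m K "\<lambda>m. of_bool (Y m = s) :: real"] assms by simp
  with True show ?thesis by simp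
qed (simp add: sum_nonneg)

lemma expected_card_image_le:
  fixes P :: "'b \<Rightarrow> real" and Y :: "'i \<Rightarrow> 'b \<Rightarrow> 'c"
  assumes "finite S" "finite K" "\<And>\<omega>. \<omega> \<in> \<Omega> \<Longrightarrow> 0 \<le> P \<omega>" "sum P \<Omega> = 1"
    and "\<And>\<omega> m. \<omega> \<in> \<Omega> \<Longrightarrow> m \<in> K \<Longrightarrow> Y m \<omega> \<in> S"
  shows "(\<Sum>\<omega>\<in>\<Omega>. P \<omega> * card ((\<lambda>m. Y m \<omega>) ` K))
         \<le> (\<Sum>s\<in>S. min 1 (\<Sum>m\<in>K. \<Sum>\<omega>\<in>\<Omega>. P \<omega> * of_bool (Y m \<omega> = s)))"
proof -
  define count where "count s \<omega> = (\<Sum>m\<in>K. of_bool (Y m \<omega> = s) :: real)" for s \<omega>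
  have "card ((\<lambda>m. Y m \<omega>) ` K) \<le> (\<Sum>s\<in>S. min 1 (count s \<omega>))" if "\<omega> \<in> \<Omega>" for \<omega>
  proof -
    have "real (card ((\<lambda>m. Y m \<omega>) ` K)) = (\<Sum>s\<in>S. of_bool (s \<in> (\<lambda>m. Y m \<omega>) ` K))"
      using assms(1,5) that by (simp add: Int_absorb1 image_subset_iff)
    also have "\<dots> \<le> (\<Sum>s\<in>S. min 1 (count s \<omega>))"
      unfolding count_def by (intro sum_mono of_bool_mem_image_le_min_count assms(2))
    finally show ?thesis .
  qed
  then have "(\<Sum>\<omega>\<in>\<Omega>. P \<omega> * card ((\<lambda>m. Y m \<omega>) ` K))
      \<le> (\<Sum>\<omega>\<in>\<Omega>. P \<omega> * (\<Sum>s\<in>S. min 1 (count s \<omega>)))"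
    using assms(3) by (intro sum_mono mult_left_mono) auto
  also have "\<dots> = (\<Sum>s\<in>S. \<Sum>\<omega>\<in>\<Omega>. P \<omega> * min 1 (count s \<omega>))"
    by (simp add: sum_distrib_left sum.swap[of _ \<Omega>])
  also have "\<dots> \<le> (\<Sum>s\<in>S. min 1 (\<Sum>\<omega>\<in>\<Omega>. P \<omega> * count s \<omega>))"
  proof (rule sum_mono, rule min.boundedI)
    fix s
    show "(\<Sum>\<omega>\<in>\<Omega>. P \<omega> * min 1 (count s \<omega>)) \<le> 1"
      using assms(3,4) by (intro weighted_sum_le) auto
    show "(\<Sum>\<omega>\<in>\<Omega>. P \<omega> * min 1 (count s \<omega>)) \<le> (\<Sum>\<omega>\<in>\<Omega>. P \<omega> * count s \<omega>)"
      using assms(3) by (intro sum_mono mult_left_mono) auto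
  qed
  also have "\<dots> = (\<Sum>s\<in>S. min 1 (\<Sum>m\<in>K. \<Sum>\<omega>\<in>\<Omega>. P \<omega> * of_bool (Y m \<omega> = s)))"
    unfolding count_def by (simp add: sum_distrib_left sum.swap[of _ \<Omega>])
  finally show ?thesis .
qed

lemma prod_of_bool:
  "finite J \<Longrightarrow> (\<Prod>i\<in>J. of_bool (P i) :: 'b :: comm_semiring_1) = of_bool (\<forall>i\<in>J. P i)"
  by (induction J rule: finite_induct) auto

lemma sum_PiE_prod_of_bool_agree:
  fixes p :: "'a \<Rightarrow> 'b :: comm_semiring_1"
  assumes "finite I" "finite A" "J \<subseteq> I" "g ` J \<subseteq> A" "sum p A = 1"
  shows "(\<Sum>f\<in>I \<rightarrow>\<^sub>E A. (\<Prod>i\<in>I. p (f i)) * of_bool (\<forall>i\<in>J. f i = g i)) = (\<Prod>i\<in>J. p (g i))"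
proof -
  define w where "w i a = p a * (if i \<in> J then of_bool (a = g i) else 1)" for i a
  have "of_bool (\<forall>i\<in>J. f i = g i) = (\<Prod>i\<in>I. if i \<in> J then of_bool (f i = g i) else (1::'b))" for f
    using assms(1,3) by (simp add: prod.If_cases Int_absorb1 finite_subset prod_of_bool)
  then have "(\<Sum>f\<in>I \<rightarrow>\<^sub>E A. (\<Prod>i\<in>I. p (f i)) * of_bool (\<forall>i\<in>J. f i = g i))
      = (\<Sum>f\<in>I \<rightarrow>\<^sub>E A. \<Prod>i\<in>I. w i (f i))"
    by (simp add: w_def prod.distrib)
  also have "\<dots> = (\<Prod>i\<in>I. \<Sum>a\<in>A. w i a)"
    using assms(1,2) by (simp add: prod_sum_PiE)
  also have "\<dots> = (\<Prod>i\<in>I. if i \<in> J then p (g i) else 1)"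
    using assms(2,4,5) by (intro prod.cong refl) (auto simp: w_def)
  also have "\<dots> = (\<Prod>i\<in>J. p (g i))"
    using assms(1,3) by (simp add: prod.If_cases Int_absorb1)
  finally show ?thesis .
qed

lemma labeling_prob_nonneg:
  assumes "\<And>x. x \<in> Hops \<Longrightarrow> 0 \<le> p x" "lbl \<in> {..<2^h} \<rightarrow>\<^sub>E Hops"
  shows "0 \<le> labeling_prob h p lbl"
  using assms unfolding labeling_prob_def by (auto intro!: prod_nonneg)

lemma sum_labeling_prob:
  assumes "finite Hops" "sum p Hops = 1"
  shows "(\<Sum>lbl\<in>{..<2^h} \<rightarrow>\<^sub>E Hops. labeling_prob h p lbl) = 1"
  using prod_sum_PiE[of "{..<2^h :: nat}" "\<lambda>_. Hops" "\<lambda>_. p"] assms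
  by (simp add: labeling_prob_def)

lemma expected_level_nodes_le:
  assumes "finite Hops" "\<And>x. x \<in> Hops \<Longrightarrow> 0 \<le> p x" "sum p Hops = 1"
    and "\<And>lbl. lbl \<in> {..<2^h} \<rightarrow>\<^sub>E Hops \<Longrightarrow> card (folded_level_nodes h j lbl) \<le> c"
  shows "expected_level_nodes h j Hops p \<le> c"
  unfolding expected_level_nodes_def
  using assms by (intro weighted_sum_le labeling_prob_nonneg sum_labeling_prob) auto

lemma subtrie_end_le:
  assumes "j \<le> h" "m < 2^(h - j)"
  shows "(m + 1) * 2^j \<le> (2::nat)^h"
proof -
  have "(m + 1) * 2^j \<le> 2^(h - j) * 2^j"
    using assms(2) by (intro mult_right_mono) auto
  also have "\<dots> = 2^h"
    using assms(1) by (simp add: power_add[symmetric])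
  finally show ?thesis .
qed

lemma subtrie_string_in_words:
  assumes "j \<le> h" "m < 2^(h - j)" "lbl \<in> {..<2^h} \<rightarrow>\<^sub>E Hops"
  shows "subtrie_string j lbl m \<in> words Hops (2^j)"
proof -
  have "i < 2^h" if "i < (m + 1) * 2^j" for i
    using that subtrie_end_le[OF assms(1,2)] by linarith
  then show ?thesis
    using assms(3) by (auto simp: subtrie_string_def words_def)
qed

lemma card_folded_level_nodes_le_level_size: "card (folded_level_nodes h j lbl) \<le> 2^(h - j)"
  unfolding folded_level_nodes_def using card_image_le[of "{..<2^(h - j) :: nat}"] by simp

lemma card_folded_level_nodes_le_card_words:
  assumes "finite Hops" "j \<le> h" "lbl \<in> {..<2^h} \<rightarrow>\<^sub>E Hops"
  shows "card (folded_level_nodes h j lbl) \<le> card Hops ^ 2^j"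
proof -
  have "folded_level_nodes h j lbl \<subseteq> words Hops (2^j)"
    unfolding folded_level_nodes_def using subtrie_string_in_words[OF assms(2) _ assms(3)] by auto
  then show ?thesis
    using card_mono[OF finite_words[OF assms(1)]] card_words[OF assms(1)] by metis
qed

lemma subtrie_string_eq_iff:
  assumes "length xs = 2^j"
  shows "subtrie_string j lbl m = xs
    \<longleftrightarrow> (\<forall>i\<in>{m * 2^j..<(m + 1) * 2^j}. lbl i = xs ! (i - m * 2^j))"
proof -
  have "subtrie_string j lbl m = xs \<longleftrightarrow> (\<forall>k<2^j. lbl (m * 2^j + k) = xs ! k)"
    using assms by (auto simp: subtrie_string_def list_eq_iff_nth_eq algebra_simps)
  also have "\<dots> \<longleftrightarrow> (\<forall>i\<in>{m * 2^j..<(m + 1) * 2^j}. lbl i = xs ! (i - m * 2^j))"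
  proof
    assume shifted: "\<forall>k<2^j. lbl (m * 2^j + k) = xs ! k"
    show "\<forall>i\<in>{m * 2^j..<(m + 1) * 2^j}. lbl i = xs ! (i - m * 2^j)"
    proof
      fix i assume "i \<in> {m * 2^j..<(m + 1) * 2^j}"
      then have "i - m * 2^j < 2^j" "m * 2^j + (i - m * 2^j) = i" by auto
      with shifted show "lbl i = xs ! (i - m * 2^j)" by metis
    qed
  qed auto
  finally show ?thesis .
qed

lemma prob_subtrie_string_eq:
  assumes "finite Hops" "sum p Hops = 1" "j \<le> h" "m < 2^(h - j)" "xs \<in> words Hops (2^j)"
  shows "(\<Sum>lbl\<in>{..<2^h} \<rightarrow>\<^sub>E Hops. labeling_prob h p lbl * of_bool (subtrie_string j lbl m = xs))
         = prod_list (map p xs)"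
proof -
  define J where "J = {m * 2^j..<(m + 1) * 2^j}"
  define g where "g i = xs ! (i - m * 2^j)" for i
  have "length xs = 2^j" "set xs \<subseteq> Hops"
    using assms(5) by (auto simp: words_def)
  have "(\<Sum>lbl\<in>{..<2^h} \<rightarrow>\<^sub>E Hops. labeling_prob h p lbl * of_bool (subtrie_string j lbl m = xs))
      = (\<Sum>lbl\<in>{..<2^h} \<rightarrow>\<^sub>E Hops. (\<Prod>i<2^h. p (lbl i)) * of_bool (\<forall>i\<in>J. lbl i = g i))"
    using \<open>length xs = 2^j\<close> by (simp add: labeling_prob_def subtrie_string_eq_iff J_def g_def)
  also have "\<dots> = (\<Prod>i\<in>J. p (g i))"
  proof (rule sum_PiE_prod_of_bool_agree[OF _ assms(1) _ _ assms(2)])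
    show "J \<subseteq> {..<2^h}"
      using subtrie_end_le[OF assms(3,4)] by (auto simp: J_def)
    have "i - m * 2^j < length xs" if "i \<in> J" for i
      using that \<open>length xs = 2^j\<close> by (auto simp: J_def)
    then show "g ` J \<subseteq> Hops"
      using \<open>set xs \<subseteq> Hops\<close> nth_mem by (fastforce simp: g_def)
  qed simp
  also have "\<dots> = prod_list (map p (map g [m * 2^j..<(m + 1) * 2^j]))"
    using prod.distinct_set_conv_list[of "[m * 2^j..<(m + 1) * 2^j]" "\<lambda>i. p (g i)"]
    by (simp add: J_def comp_def)
  also have "map g [m * 2^j..<(m + 1) * 2^j] = xs"
    using \<open>length xs = 2^j\<close> by (simp add: g_def list_eq_iff_nth_eq)
  finally show ?thesis .
qed

lemma expected_level_nodes_le_sum_min: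
  assumes "finite Hops" "\<And>x. x \<in> Hops \<Longrightarrow> 0 \<le> p x" "sum p Hops = 1" "j \<le> h"
  shows "expected_level_nodes h j Hops p
         \<le> (\<Sum>xs\<in>words Hops (2^j). min 1 (2^(h - j) * prod_list (map p xs)))"
proof -
  have "expected_level_nodes h j Hops p
      \<le> (\<Sum>xs\<in>words Hops (2^j). min 1 (\<Sum>m<2^(h - j).
            \<Sum>lbl\<in>{..<2^h} \<rightarrow>\<^sub>E Hops. labeling_prob h p lbl * of_bool (subtrie_string j lbl m = xs)))"
    unfolding expected_level_nodes_def folded_level_nodes_def
    using assms
    by (intro expected_card_image_le finite_words labeling_prob_nonneg sum_labeling_prob
        subtrie_string_in_words) auto
  also have "\<dots> = (\<Sum>xs\<in>words Hops (2^j). min 1 (2^(h - j) * prod_list (map p xs)))"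
    using assms by (intro sum.cong refl) (simp add: prob_subtrie_string_eq)
  finally show ?thesis .
qed

theorem lemma2:
  fixes h j :: nat and Hops :: "'a set" and p :: "'a \<Rightarrow> real"
  assumes "h \<ge> 1"
    and "finite Hops"
    and "\<And>x. x \<in> Hops \<Longrightarrow> p x \<ge> 0"
    and "(\<Sum>x\<in>Hops. p x) = 1"
    and "1 \<le> j" and "j \<le> h"
  shows "(j < h \<longrightarrow> expected_level_nodes h j Hops p \<le> entropy Hops p / real (h - j) * 2^h + 3)
       \<and> expected_level_nodes h j Hops p \<le> 2^(h - j)
       \<and> expected_level_nodes h j Hops p \<le> real (card Hops) ^ (2^j)"
proof (intro conjI impI)
  have "expected_level_nodes h j Hops p \<le> real (2^(h - j))"
    using assms card_folded_level_nodes_le_level_size by (intro expected_level_nodes_le)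
  then show "expected_level_nodes h j Hops p \<le> 2^(h - j)"
    by simp
  have "expected_level_nodes h j Hops p \<le> real (card Hops ^ 2^j)"
    using assms card_folded_level_nodes_le_card_words by (intro expected_level_nodes_le)
  then show "expected_level_nodes h j Hops p \<le> real (card Hops) ^ (2^j)"
    by simp
  assume "j < h"
  let ?Q = "\<lambda>xs. prod_list (map p xs)"
  have "expected_level_nodes h j Hops p \<le> (\<Sum>xs\<in>words Hops (2^j). min 1 (2^(h - j) * ?Q xs))"
    using assms by (intro expected_level_nodes_le_sum_min)
  also have "\<dots> \<le> 2^(h - j) * entropy (words Hops (2^j)) ?Q / (h - j) + 1"
    using assms \<open>j < h\<close>
    by (intro sum_min_one_le_entropy finite_words prod_list_map_nonneg)
       (auto simp: sum_words_prod_list)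
  also have "\<dots> = entropy Hops p / real (h - j) * 2^h + 1"
    using assms by (simp add: entropy_words power_add[symmetric])
  finally show "expected_level_nodes h j Hops p \<le> entropy Hops p / real (h - j) * 2^h + 3"
    by simp
qed

end
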